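(* In the construction described in the context, for each good path $\pi$ with $lh(\pi)\le 2$ and each $X\cup\{y\}\subseteq V$ with enumeration $\mathbf{x}$ of $X$: if $(M_{cut},A_{cut}),v_\pi\models D_Xy$ (dependence atom evaluated in the team $A_{cut}$), then $v_\pi(\mathbf{x})\in I(R^{X,y})$.
   Context: Fix an LFD-formula $\varphi$; let $V=V_\varphi$ (variables occurring in $\varphi$, $|V|=k$), $\tau=\tau_\varphi$, $\Phi=Cl(\varphi)$: add to $\{\varphi\}$ all $D_Xy$ with $X\cup\{y\}\subseteq V$ and close under subformulas and single negation. Free variables: $Free(P\mathbf{x})$ = variables of $\mathbf{x}$, $Free(D_Xy)=Free(\mathbb{D}_X\psi)=X$, Booleans take unions. A $\Phi$-type is $\Sigma\subseteq\Phi$ with: $\neg\psi\in\Sigma$ iff $\psi\notin\Sigma$; $\psi\wedge\chi\in\Sigma$ iff both in $\Sigma$; $\mathbb{D}_X\psi\in\Sigma\Rightarrow\psi\in\Sigma$; $D_Xx\in\Sigma$ for $x\in X$; $D_Xy\in\Sigma\ \forall y\in Y$ and $D_Yz\in\Sigma\ \forall z\in Z$ imply $D_Xz\in\Sigma\ \forall z\in Z$. $D^\Sigma_X=\{y\in V\mid D_Xy\in\Sigma\}$; $\Sigma\sim_X\Delta$ iff $\{\psi\in\Sigma\mid Free(\psi)\subseteq D^\Sigma_X\}=\{\psi\in\Delta\mid Free(\psi)\subseteq D^\Sigma_X\}$. A type model is a set $\mathfrak{M}$ of $\Phi$-types with: if $\neg\mathbb{D}_X\neg\psi\in\Sigma\in\mathfrak{M}$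 there is $\Delta\in\mathfrak{M}$ with $\psi\in\Delta$, $\Sigma\sim_X\Delta$; and $\Sigma\sim_\emptyset\Delta$ for all $\Sigma,\Delta\in\mathfrak{M}$. Fix a type model $\mathfrak{M}$ and $\Sigma_0\in\mathfrak{M}$. A good path is $\pi=\langle\Sigma_0,X_1,\Sigma_1,\dots,X_n,\Sigma_n\rangle$ ($n\ge0$) with $\Sigma_i\in\mathfrak{M}$, $X_i\subseteq V$, $\Sigma_{i-1}\sim_{X_i}\Sigma_i$; $last(\pi)=\Sigma_n$, $lh(\pi)=n+1$. Path assignments $v_\pi:V\to$ objects: $v_{\langle\Sigma_0\rangle}(v)=(\langle\Sigma_0\rangle,v)$; for $\pi=(\pi',X,\Sigma)$, $v_\pi(v)=v_{\pi'}(v)$ if $v\in D^{last(\pi')}_X$ and $v_\pi(v)=(\pi,v)$ otherwise. $A=\{v_\pi\mid\pi$ good path$\}$; $M$ has domain $\bigcup_\pi v_\pi[V]$, and an $r$-ary $P\in\tau$ holds of $((\pi_1,x_1),\dots,(\pi_r,x_r))$ iff the $\pi_i$ are linearly ordered by initial segment and $P x_1\dots x_r\in last(\pi_j)$ for the longest $\pi_j$. $\mathbb{M}=(M,A)$. The cut-off model: $A_{cut}=\{v_\pi\mid lh(\pi)\le3\}$, $M_{cut}$ the induced substructure of $M$ on $\bigcup\{v_\pi[V]\mid v_\pi\in A_{cut}\}$. $\tau^+=\tau\cup\{R^{X,y}\mid X\cup\{y\}\subseteq V\}$ with $R^{X,y}$ of arity $|X|$ (with a fixed enumeration $\mathbf{x}$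 of $X$), interpreted in $M_{cut}$ by $I(R^{X,y})=\{v_\pi(\mathbf{x})\mid v_\pi\in A_{cut},\ D_Xy\in last(\pi)\}$. Dependence-model semantics: $s\models D_Xy$ iff for all $t$ in the team, $s\restriction X=t\restriction X$ implies $s(y)=t(y)$. *)

theory Defs
  imports Main
begin

datatype ('p,'v) fm =
    Pred 'p "'v list"
  | Dep "'v set" 'v
  | Neg "('p,'v) fm"
  | Conj "('p,'v) fm" "('p,'v) fm"
  | DD "'v set" "('p,'v) fm"

fun vars :: "('p,'v) fm \<Rightarrow> 'v set" where
  "vars (Pred P xs) = set xs"
| "vars (Dep X y) = X \<union> {y}"
| "vars (Neg \<psi>) = vars \<psi>"
| "vars (Conj \<psi> \<chi>) = vars \<psi> \<union> vars \<chi>"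
| "vars (DD X \<psi>) = X \<union> vars \<psi>"

fun free :: "('p,'v) fm \<Rightarrow> 'v set" where
  "free (Pred P xs) = set xs"
| "free (Dep X y) = X"
| "free (Neg \<psi>) = free \<psi>"
| "free (Conj \<psi> \<chi>) = free \<psi> \<union> free \<chi>"
| "free (DD X \<psi>) = X"

fun is_neg :: "('p,'v) fm \<Rightarrow> bool" where
  "is_neg (Neg _) = True"
| "is_neg _ = False"

inductive_set cl :: "('p,'v) fm \<Rightarrow> ('p,'v) fm set" for \<phi> where
  base: "\<phi> \<in> cl \<phi>"
| dep: "X \<union> {y} \<subseteq> vars \<phi> \<Longrightarrow> Dep X y \<in> cl \<phi>"
| sub_neg: "Neg \<psi> \<in> cl \<phi> \<Longrightarrow> \<psi> \<in> cl \<phi>"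
| sub_conj1: "Conj \<psi> \<chi> \<in> cl \<phi> \<Longrightarrow> \<psi> \<in> cl \<phi>"
| sub_conj2: "Conj \<psi> \<chi> \<in> cl \<phi> \<Longrightarrow> \<chi> \<in> cl \<phi>"
| sub_DD: "DD X \<psi> \<in> cl \<phi> \<Longrightarrow> \<psi> \<in> cl \<phi>"
| neg: "\<psi> \<in> cl \<phi> \<Longrightarrow> \<not> is_neg \<psi> \<Longrightarrow> Neg \<psi> \<in> cl \<phi>"

definition Dset :: "('p,'v) fm \<Rightarrow> ('p,'v) fm set \<Rightarrow> 'v set \<Rightarrow> 'v set" where
  "Dset \<phi> \<Sigma> X = {y \<in> vars \<phi>. Dep X y \<in> \<Sigma>}"

definition sim :: "('p,'v) fm \<Rightarrow> ('p,'v) fm set \<Rightarrow> 'v set \<Rightarrow> ('p,'v) fm set \<Rightarrow> bool" where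
  "sim \<phi> \<Sigma> X \<Delta> \<longleftrightarrow>
     {\<psi> \<in> \<Sigma>. free \<psi> \<subseteq> Dset \<phi> \<Sigma> X} = {\<psi> \<in> \<Delta>. free \<psi> \<subseteq> Dset \<phi> \<Sigma> X}"

definition is_type :: "('p,'v) fm \<Rightarrow> ('p,'v) fm set \<Rightarrow> bool" where
  "is_type \<phi> \<Sigma> \<longleftrightarrow>
     \<Sigma> \<subseteq> cl \<phi>
   \<and> (\<forall>\<psi>. Neg \<psi> \<in> cl \<phi> \<longrightarrow> (Neg \<psi> \<in> \<Sigma> \<longleftrightarrow> \<psi> \<notin> \<Sigma>))
   \<and> (\<forall>\<psi> \<chi>. Conj \<psi> \<chi> \<in> cl \<phi> \<longrightarrow> (Conj \<psi> \<chi> \<in> \<Sigma> \<longleftrightarrow> \<psi> \<in> \<Sigma> \<and> \<chi> \<in> \<Sigma>))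
   \<and> (\<forall>X \<psi>. DD X \<psi> \<in> \<Sigma> \<longrightarrow> \<psi> \<in> \<Sigma>)
   \<and> (\<forall>X x. X \<subseteq> vars \<phi> \<and> x \<in> X \<longrightarrow> Dep X x \<in> \<Sigma>)
   \<and> (\<forall>X Y Z. X \<union> Y \<union> Z \<subseteq> vars \<phi> \<longrightarrow>
        (\<forall>y\<in>Y. Dep X y \<in> \<Sigma>) \<longrightarrow> (\<forall>z\<in>Z. Dep Y z \<in> \<Sigma>) \<longrightarrow> (\<forall>z\<in>Z. Dep X z \<in> \<Sigma>))"

definition type_model :: "('p,'v) fm \<Rightarrow> ('p,'v) fm set set \<Rightarrow> bool" where
  "type_model \<phi> \<M> \<longleftrightarrow>
     (\<forall>\<Sigma>\<in>\<M>. is_type \<phi> \<Sigma>)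
   \<and> (\<forall>\<Sigma>\<in>\<M>. \<forall>X \<psi>. Neg (DD X (Neg \<psi>)) \<in> \<Sigma> \<longrightarrow> (\<exists>\<Delta>\<in>\<M>. \<psi> \<in> \<Delta> \<and> sim \<phi> \<Sigma> X \<Delta>))
   \<and> (\<forall>\<Sigma>\<in>\<M>. \<forall>\<Delta>\<in>\<M>. sim \<phi> \<Sigma> {} \<Delta>)"

text \<open>A path <Sigma0, X1, Sigma1, ..., Xn, Sigman> is represented (with Sigma0 fixed separately)
  by the list [(Xn,Sigman), ..., (X1,Sigma1)], most recent step first. lh = length + 1.\<close>

type_synonym ('p,'v) path = "('v set \<times> ('p,'v) fm set) list"

fun lastp :: "('p,'v) fm set \<Rightarrow> ('p,'v) path \<Rightarrow> ('p,'v) fm set" where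
  "lastp \<Sigma>0 [] = \<Sigma>0"
| "lastp \<Sigma>0 ((X,\<Sigma>) # \<pi>) = \<Sigma>"

fun good :: "('p,'v) fm \<Rightarrow> ('p,'v) fm set set \<Rightarrow> ('p,'v) fm set \<Rightarrow> ('p,'v) path \<Rightarrow> bool" where
  "good \<phi> \<M> \<Sigma>0 [] \<longleftrightarrow> \<Sigma>0 \<in> \<M>"
| "good \<phi> \<M> \<Sigma>0 ((X,\<Sigma>) # \<pi>) \<longleftrightarrow>
     good \<phi> \<M> \<Sigma>0 \<pi> \<and> \<Sigma> \<in> \<M> \<and> X \<subseteq> vars \<phi> \<and> sim \<phi> (lastp \<Sigma>0 \<pi>) X \<Sigma>"

text \<open>Objects are pairs (path, variable).\<close>
fun vp :: "('p,'v) fm \<Rightarrow> ('p,'v) fm set \<Rightarrow> ('p,'v) path \<Rightarrow> 'v \<Rightarrow> ('p,'v) path \<times> 'v" where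
  "vp \<phi> \<Sigma>0 [] v = ([], v)"
| "vp \<phi> \<Sigma>0 ((X,\<Sigma>) # \<pi>) v =
     (if v \<in> Dset \<phi> (lastp \<Sigma>0 \<pi>) X then vp \<phi> \<Sigma>0 \<pi> v else ((X,\<Sigma>) # \<pi>, v))"

text \<open>A_cut = {v_pi | lh(pi) <= 3}, i.e. list length <= 2.\<close>
definition A_cut :: "('p,'v) fm \<Rightarrow> ('p,'v) fm set set \<Rightarrow> ('p,'v) fm set \<Rightarrow> ('v \<Rightarrow> ('p,'v) path \<times> 'v) set" where
  "A_cut \<phi> \<M> \<Sigma>0 = {vp \<phi> \<Sigma>0 \<pi> | \<pi>. good \<phi> \<M> \<Sigma>0 \<pi> \<and> length \<pi> \<le> 2}"

definition I_R :: "('p,'v) fm \<Rightarrow> ('p,'v) fm set set \<Rightarrow> ('p,'v) fm set \<Rightarrow> 'v set \<Rightarrow> 'v \<Rightarrow> 'v list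
                    \<Rightarrow> (('p,'v) path \<times> 'v) list set" where
  "I_R \<phi> \<M> \<Sigma>0 X y xs =
     {map (vp \<phi> \<Sigma>0 \<pi>) xs | \<pi>. good \<phi> \<M> \<Sigma>0 \<pi> \<and> length \<pi> \<le> 2 \<and> Dep X y \<in> lastp \<Sigma>0 \<pi>}"

definition dep_sat :: "('v \<Rightarrow> 'a) set \<Rightarrow> ('v \<Rightarrow> 'a) \<Rightarrow> 'v set \<Rightarrow> 'v \<Rightarrow> bool" where
  "dep_sat T s X y \<longleftrightarrow> (\<forall>t\<in>T. (\<forall>x\<in>X. s x = t x) \<longrightarrow> s y = t y)"

end

theory Submission
  imports Defs
begin

text \<open>Extend \<open>\<pi>\<close> by one step \<open>(X, last \<pi>)\<close>, a good path since \<open>\<sim>\<^sub>X\<close> is reflexive.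
  Its assignment agrees with \<open>v\<^sub>\<pi>\<close> on \<open>D\<^sub>X\<^sup>last \<pi>\<close>, which contains \<open>X\<close>; so the dependence atom
  forces agreement on \<open>y\<close> as well. If \<open>D\<^sub>Xy \<notin> last \<pi>\<close>, however, the extension sends \<open>y\<close> to a fresh
  object labelled by the longer path, whereas every value of \<open>v\<^sub>\<pi>\<close> is labelled by a prefix of \<open>\<pi>\<close>.\<close>

lemma good_lastp_mem: "good \<phi> \<M> \<Sigma>0 \<pi> \<Longrightarrow> lastp \<Sigma>0 \<pi> \<in> \<M>"
  by (cases \<pi>) auto

lemma good_Cons_lastp:
  "good \<phi> \<M> \<Sigma>0 \<pi> \<Longrightarrow> X \<subseteq> vars \<phi> \<Longrightarrow> good \<phi> \<M> \<Sigma>0 ((X, lastp \<Sigma>0 \<pi>) # \<pi>)"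
  by (simp add: good_lastp_mem sim_def)

lemma length_fst_vp_le: "length (fst (vp \<phi> \<Sigma>0 \<pi> v)) \<le> length \<pi>"
  by (induction \<pi>) auto

lemma vp_Cons_not_Dset_neq:
  assumes "v \<notin> Dset \<phi> (lastp \<Sigma>0 \<pi>) X"
  shows "vp \<phi> \<Sigma>0 ((X, \<Sigma>) # \<pi>) v \<noteq> vp \<phi> \<Sigma>0 \<pi> v"
proof -
  have "vp \<phi> \<Sigma>0 ((X, \<Sigma>) # \<pi>) v = ((X, \<Sigma>) # \<pi>, v)" using assms by simp
  then show ?thesis using length_fst_vp_le[of \<phi> \<Sigma>0 \<pi> v] by (metis fst_conv impossible_Cons)
qed

lemma is_type_Dset_reflexive:
  assumes "is_type \<phi> \<Sigma>" and "X \<subseteq> vars \<phi>"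
  shows "X \<subseteq> Dset \<phi> \<Sigma> X"
proof
  fix x assume "x \<in> X"
  then have "Dep X x \<in> \<Sigma>" using assms unfolding is_type_def by blast
  then show "x \<in> Dset \<phi> \<Sigma> X" using \<open>x \<in> X\<close> assms(2) unfolding Dset_def by blast
qed

lemma Dep_mem_lastp_if_dep_sat:
  assumes type: "is_type \<phi> (lastp \<Sigma>0 \<pi>)"
    and vars: "X \<union> {y} \<subseteq> vars \<phi>"
    and team: "vp \<phi> \<Sigma>0 ((X, lastp \<Sigma>0 \<pi>) # \<pi>) \<in> T"
    and sat: "dep_sat T (vp \<phi> \<Sigma>0 \<pi>) X y"
  shows "Dep X y \<in> lastp \<Sigma>0 \<pi>"
proof (rule ccontr)
  let ?\<pi>' = "(X, lastp \<Sigma>0 \<pi>) # \<pi>"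
  assume "Dep X y \<notin> lastp \<Sigma>0 \<pi>"
  then have "y \<notin> Dset \<phi> (lastp \<Sigma>0 \<pi>) X" by (simp add: Dset_def)
  then have differ: "vp \<phi> \<Sigma>0 ?\<pi>' y \<noteq> vp \<phi> \<Sigma>0 \<pi> y" by (rule vp_Cons_not_Dset_neq)
  have "X \<subseteq> Dset \<phi> (lastp \<Sigma>0 \<pi>) X"
    using type vars by (intro is_type_Dset_reflexive) auto
  then have "\<forall>x\<in>X. vp \<phi> \<Sigma>0 \<pi> x = vp \<phi> \<Sigma>0 ?\<pi>' x" by auto
  then have "vp \<phi> \<Sigma>0 \<pi> y = vp \<phi> \<Sigma>0 ?\<pi>' y" using sat team unfolding dep_sat_def by blast
  with differ show False by simp
qed

theorem proposition4p1:
  fixes \<phi> :: "('p,'v) fm" and \<M> :: "('p,'v) fm set set" and \<Sigma>0 :: "('p,'v) fm set"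
    and \<pi> :: "('p,'v) path" and X :: "'v set" and y :: 'v and xs :: "'v list"
  assumes "type_model \<phi> \<M>"
    and "\<Sigma>0 \<in> \<M>"
    and "good \<phi> \<M> \<Sigma>0 \<pi>"
    and "length \<pi> \<le> 1"
    and "X \<union> {y} \<subseteq> vars \<phi>"
    and "set xs = X" and "distinct xs"
    and "dep_sat (A_cut \<phi> \<M> \<Sigma>0) (vp \<phi> \<Sigma>0 \<pi>) X y"
  shows "map (vp \<phi> \<Sigma>0 \<pi>) xs \<in> I_R \<phi> \<M> \<Sigma>0 X y xs"
proof -
  let ?\<pi>' = "(X, lastp \<Sigma>0 \<pi>) # \<pi>"
  have "lastp \<Sigma>0 \<pi> \<in> \<M>" using assms(3) by (rule good_lastp_mem)
  then have type: "is_type \<phi> (lastp \<Sigma>0 \<pi>)"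
    using assms(1) unfolding type_model_def by blast
  have "good \<phi> \<M> \<Sigma>0 ?\<pi>'" using assms(5) by (intro good_Cons_lastp[OF assms(3)]) auto
  moreover have "length ?\<pi>' \<le> 2" using assms(4) by simp
  ultimately have "vp \<phi> \<Sigma>0 ?\<pi>' \<in> A_cut \<phi> \<M> \<Sigma>0"
    unfolding A_cut_def by blast
  then have "Dep X y \<in> lastp \<Sigma>0 \<pi>"
    by (rule Dep_mem_lastp_if_dep_sat[OF type assms(5) _ assms(8)])
  moreover have "length \<pi> \<le> 2" using assms(4) by simp
  ultimately show ?thesis
    using assms(3) unfolding I_R_def by blast
qed

end
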